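(* Let $\Lambda$ be a lattice of rank $s$ with basis $\mathcal V=(v_1,\ldots,v_s)$, $\bar a=(a_1,\ldots,a_t)\in(\mathcal F^0(\Lambda,\bar K))^t$, and $\bar n=(n_1,\ldots,n_s)$ with each $n_i$ a positive integer coprime to $p$. Let $G=\Lambda/\Lambda_{\bar n,\mathcal V}$, $\bar a_*$ the pushforward, and let $q_0=p^{r_0}$ ($r_0>0$) be minimal such that $\widehat{(a_j)_*}(G^\vee)\subseteq\mathrm{GF}(q_0)$ for all $j=1,\ldots,t$. (a) The following are equivalent: (i) there exists a nonzero $\Lambda_{\bar n,\mathcal V}$-periodic $\bar a$-harmonic function $\Lambda\to\bar K$; (ii) $V(\bar a_* )\ne\emptyset$; (iii) the system $\sigma_{a_j,\mathcal V}(x_1,\ldots,x_s)=0$ ($j=1,\ldots,t$), $x_i^{n_i}=1$ ($i=1,\ldots,s$) has a solution $\xi\in(\bar K^\times)^s$. (b) $\ker(\Delta_{\bar a_*})\subseteq(\mathcal F(G,\bar K),* )$ coincides with the principal convolution ideal generated by the convolution product $\prod_{j=1}^t\big(\delta_0-\Delta_{(a_j)_*}^{q_0-1}(\delta_0)\big)$, and the operator $\prod_{j=1}^t\big(1_G-\Delta_{(a_j)_*}^{q_0-1}\big)$ is the orthogonal projection of $\mathcal F(G,\bar K)$ onto $\ker(\Delta_{\bar a_*})$. (c) If $t=1$ and $a_1=a$, then (i)–(iii) are equivalent to each of: (iv) $\Delta_{a_*}^{q_0-1}(\delta_0)\ne\delta_0$, equivalently $\Delta_{a_*}^{q_0-1}\ne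 1_G$; (v) the sequence $\big(\Delta_{a_*}^k(\delta_0)\big)_{k\ge0}$ in $\mathcal F(G,\bar K)$ is not periodic.
   Context: $K=\mathrm{GF}(p)$, $\bar K$ an algebraic closure. For an abelian group $G$, $\mathcal F(G,\bar K)$, $\mathcal F^0(G,\bar K)$ denote all, resp. finitely supported, functions $G\to\bar K$; $(f*a)(g)=\sum_hf(h)a(g-h)$, $\Delta_af=f*a$, $\Delta_{\bar a}$ has kernel $\bigcap_j\ker\Delta_{a_j}$; $f$ is $\bar a$-harmonic if $f*a_j=0$ for all $j$. $\delta_0$ is the delta function at $0$, $1_G$ the identity operator. $\Lambda_{\bar n,\mathcal V}=\sum_in_i\mathbb Zv_i$; a function is $\Lambda_{\bar n,\mathcal V}$-periodic if invariant under translations by $\Lambda_{\bar n,\mathcal V}$. With $\pi:\Lambda\to G$ the projection, $(a_j)_*(c)=\sum_{v\in\pi^{-1}(c)}a_j(v)$ and $\bar a_*=((a_j)_* )_j$. $G^\vee$ is the group of homomorphisms $G\to\bar K^\times$, $\hat b(g^\vee)=\sum_{g\in G}b(g)g^\vee(g)$, $V(\bar a_* )=\{g^\vee:\widehat{(a_j)_*}(g^\vee)=0\ \forall j\}$. The symbol is $\sigma_{a,\mathcal V}=\sum_{v=\sum\alpha_iv_i}a(v)x_1^{-\alpha_1}\cdots x_s^{-\alpha_s}$. Orthogonality is with respect to $\langle f_1,f_2\rangle_1=\frac1{|G|}\sum_{g\in G}f_1(g)f_2(-g)$. The principal convolution ideal generated by $f$ is $\{f*c:c\in\mathcal F(G,\bar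 K)\}$. *)

theory Defs
  imports Complex_Main "HOL-Computational_Algebra.Polynomial" "HOL-Library.Function_Algebras"
begin

definition alg_closure_GFp :: "nat \<Rightarrow> 'k::field itself \<Rightarrow> bool" where
  "alg_closure_GFp p _ \<longleftrightarrow> prime p \<and> CHAR('k) = p
     \<and> (\<forall>P::'k poly. degree P > 0 \<longrightarrow> (\<exists>x. poly P x = 0))
     \<and> (\<forall>x::'k. \<exists>r>0. x ^ (p ^ r) = x)"

(* The lattice \<Lambda> is identified with \<int>^s via its basis V: v = \<Sum> (v i) v_i. *)
type_synonym 's lat = "'s \<Rightarrow> int"

definition fin_supp :: "('s lat \<Rightarrow> 'k::zero) \<Rightarrow> bool" where
  "fin_supp a \<longleftrightarrow> finite {v. a v \<noteq> 0}"

definition conv_lat :: "('s lat \<Rightarrow> 'k::comm_ring_1) \<Rightarrow> ('s lat \<Rightarrow> 'k) \<Rightarrow> 's lat \<Rightarrow> 'k" where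
  "conv_lat f a g = (\<Sum>w\<in>{w. a w \<noteq> 0}. f (g - w) * a w)"

definition harmonic :: "nat \<Rightarrow> (nat \<Rightarrow> 's lat \<Rightarrow> 'k::comm_ring_1) \<Rightarrow> ('s lat \<Rightarrow> 'k) \<Rightarrow> bool" where
  "harmonic t a f \<longleftrightarrow> (\<forall>j<t. conv_lat f (a j) = (\<lambda>_. 0))"

(* invariance under the sublattice \<Lambda>_{n,V} = \<Sum> n_i \<int> v_i *)
definition periodic_lat :: "('s \<Rightarrow> nat) \<Rightarrow> ('s lat \<Rightarrow> 'k) \<Rightarrow> bool" where
  "periodic_lat n f \<longleftrightarrow> (\<forall>v i. f (v(i := v i + int (n i))) = f v)"

(* G = \<Lambda>/\<Lambda>_{n,V}, represented by reduced coordinate vectors *)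
definition Gset :: "('s \<Rightarrow> nat) \<Rightarrow> 's lat set" where
  "Gset n = {g. \<forall>i. 0 \<le> g i \<and> g i < int (n i)}"

definition red :: "('s \<Rightarrow> nat) \<Rightarrow> 's lat \<Rightarrow> 's lat" where
  "red n v = (\<lambda>i. v i mod int (n i))"

(* F(G, \<bar>K): functions on G, extended by 0 outside the set of representatives *)
definition FG :: "('s \<Rightarrow> nat) \<Rightarrow> ('s lat \<Rightarrow> 'k::zero) set" where
  "FG n = {f. \<forall>g. g \<notin> Gset n \<longrightarrow> f g = 0}"

definition convG :: "('s::finite \<Rightarrow> nat) \<Rightarrow> ('s lat \<Rightarrow> 'k::comm_ring_1) \<Rightarrow> ('s lat \<Rightarrow> 'k) \<Rightarrow> 's lat \<Rightarrow> 'k" where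
  "convG n f b g = (if g \<in> Gset n then (\<Sum>h\<in>Gset n. f h * b (red n (g - h))) else 0)"

definition deltaG :: "('s \<Rightarrow> nat) \<Rightarrow> 's lat \<Rightarrow> 'k::{zero,one}" where
  "deltaG n g = (if g = 0 then 1 else 0)"

definition pushfwd :: "('s \<Rightarrow> nat) \<Rightarrow> ('s lat \<Rightarrow> 'k::comm_ring_1) \<Rightarrow> 's lat \<Rightarrow> 'k" where
  "pushfwd n a c = (if c \<in> Gset n then (\<Sum>v\<in>{v. a v \<noteq> 0 \<and> red n v = c}. a v) else 0)"

definition DeltaG_pow :: "('s::finite \<Rightarrow> nat) \<Rightarrow> ('s lat \<Rightarrow> 'k::comm_ring_1) \<Rightarrow> nat \<Rightarrow> ('s lat \<Rightarrow> 'k) \<Rightarrow> ('s lat \<Rightarrow> 'k)" where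
  "DeltaG_pow n b k = ((\<lambda>f. convG n f b) ^^ k)"

definition kerG :: "('s::finite \<Rightarrow> nat) \<Rightarrow> nat \<Rightarrow> (nat \<Rightarrow> 's lat \<Rightarrow> 'k::comm_ring_1) \<Rightarrow> ('s lat \<Rightarrow> 'k) set" where
  "kerG n t b = {f \<in> FG n. \<forall>j<t. convG n f (b j) = (\<lambda>_. 0)}"

definition principal_ideal :: "('s::finite \<Rightarrow> nat) \<Rightarrow> ('s lat \<Rightarrow> 'k::comm_ring_1) \<Rightarrow> ('s lat \<Rightarrow> 'k) set" where
  "principal_ideal n P = {convG n P c | c. c \<in> FG n}"

fun conv_prod :: "('s::finite \<Rightarrow> nat) \<Rightarrow> (nat \<Rightarrow> 's lat \<Rightarrow> 'k::comm_ring_1) \<Rightarrow> nat \<Rightarrow> 's lat \<Rightarrow> 'k" where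
  "conv_prod n F 0 = deltaG n"
| "conv_prod n F (Suc t) = convG n (conv_prod n F t) (F t)"

fun op_prod :: "(nat \<Rightarrow> 'f \<Rightarrow> 'f) \<Rightarrow> nat \<Rightarrow> 'f \<Rightarrow> 'f" where
  "op_prod T 0 = id"
| "op_prod T (Suc t) = T t \<circ> op_prod T t"

definition innerG :: "('s::finite \<Rightarrow> nat) \<Rightarrow> ('s lat \<Rightarrow> 'k::field) \<Rightarrow> ('s lat \<Rightarrow> 'k) \<Rightarrow> 'k" where
  "innerG n f1 f2 = (\<Sum>g\<in>Gset n. f1 g * f2 (red n (- g))) / of_nat (card (Gset n))"

definition orth_proj :: "('s::finite \<Rightarrow> nat) \<Rightarrow> (('s lat \<Rightarrow> 'k::field) \<Rightarrow> ('s lat \<Rightarrow> 'k)) \<Rightarrow> ('s lat \<Rightarrow> 'k) set \<Rightarrow> bool" where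
  "orth_proj n T W \<longleftrightarrow> (\<forall>f\<in>FG n. T f \<in> W \<and> (\<forall>w\<in>W. innerG n (\<lambda>g. f g - T f g) w = 0))
      \<and> (\<forall>w\<in>W. T w = w)"

definition characters :: "('s::finite \<Rightarrow> nat) \<Rightarrow> ('s lat \<Rightarrow> 'k::field) set" where
  "characters n = {\<chi>. (\<forall>g\<in>Gset n. \<chi> g \<noteq> 0) \<and>
      (\<forall>g\<in>Gset n. \<forall>h\<in>Gset n. \<chi> (red n (g + h)) = \<chi> g * \<chi> h)}"

definition fhat :: "('s::finite \<Rightarrow> nat) \<Rightarrow> ('s lat \<Rightarrow> 'k::field) \<Rightarrow> ('s lat \<Rightarrow> 'k) \<Rightarrow> 'k" where
  "fhat n b \<chi> = (\<Sum>g\<in>Gset n. b g * \<chi> g)"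

definition Vset :: "('s::finite \<Rightarrow> nat) \<Rightarrow> nat \<Rightarrow> (nat \<Rightarrow> 's lat \<Rightarrow> 'k::field) \<Rightarrow> ('s lat \<Rightarrow> 'k) set" where
  "Vset n t b = {\<chi> \<in> characters n. \<forall>j<t. fhat n (b j) \<chi> = 0}"

definition symbol_eval :: "('s::finite lat \<Rightarrow> 'k::field) \<Rightarrow> ('s \<Rightarrow> 'k) \<Rightarrow> 'k" where
  "symbol_eval a x = (\<Sum>v\<in>{v. a v \<noteq> 0}. a v * (\<Prod>i\<in>UNIV. x i powi (- v i)))"

definition periodic_seq :: "(nat \<Rightarrow> 'a) \<Rightarrow> bool" where
  "periodic_seq u \<longleftrightarrow> (\<exists>T>0. \<forall>k. u (k + T) = u k)"

end

theory Submission
  imports Defs "HOL-Library.FuncSet"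
begin

(*
  Everything is transported to the finite group G = Lambda / Lambda_{n,V}, a product of cyclic
  groups Z/n_i, on which the Fourier transform turns convolution into multiplication; write b_j
  for the pushforward of a_j to G. Because the n_i are prime to p and K is algebraically
  closed, K contains n_i distinct n_i-th roots of unity, so no nonzero polynomial of degree
  < n_i vanishes at all of them; inducting over the coordinates, the monomial characters
  g |-> z^g (z a tuple of roots of unity) separate the functions on G.

  A periodic harmonic function restricts to a function on G killed by every Delta_{b_j}, and a
  nonzero such function has a monomial character at which all Fourier coefficients of the b_j
  vanish; conversely, a character chi in V(b) gives the harmonic function v |-> chi(-v), and a
  monomial character z^g lies in V(b) exactly when 1/z is a common root of the symbols.

  Every Fourier coefficient x satisfies x^q0 = x, hence x^(q0-1) is 0 or 1, and
  prod_j (1 - hat(b_j)^(q0-1)) is the indicator function of V(b). The corresponding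
  convolution operator is therefore the idempotent with range the kernel, and it is
  self-adjoint for <_,_>_1 because <u, w>_1 = (u * w)(0) / |G|.
*)

lemma prod_linear_factors_dvd:
  fixes Q :: "'k::field poly"
  assumes "finite S" and "\<And>r. r \<in> S \<Longrightarrow> poly Q r = 0"
  shows "(\<Prod>r\<in>S. [:-r, 1:]) dvd Q"
  using assms
proof (induction S rule: finite_induct)
  case empty
  then show ?case by simp
next
  case (insert r S)
  then have "(\<Prod>s\<in>S. [:-s, 1:]) dvd Q"
    by simp
  then obtain H where H: "Q = (\<Prod>s\<in>S. [:-s, 1:]) * H"
    by (elim dvdE)
  have "poly (\<Prod>s\<in>S. [:-s, 1:]) r \<noteq> 0"
    using insert.hyps by (auto simp: poly_prod)
  moreover have "poly Q r = 0"
    using insert.prems by simp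
  ultimately have "[:-r, 1:] dvd H"
    using H poly_eq_0_iff_dvd by fastforce
  then have "[:-r, 1:] * (\<Prod>s\<in>S. [:-s, 1:]) dvd Q"
    unfolding H by (metis mult.commute mult_dvd_mono dvd_refl)
  then show ?case
    using insert.hyps by simp
qed

lemma square_linear_not_dvd_power_minus_one:
  fixes r :: "'k::field"
  assumes "of_nat m \<noteq> (0::'k)"
  shows "\<not> [:-r, 1:] ^ 2 dvd monom 1 m - 1"
proof
  let ?L = "[:-r, 1:]"
  assume "?L ^ 2 dvd monom 1 m - 1"
  then obtain W where "monom 1 m - 1 = ?L ^ 2 * W"
    by (elim dvdE)
  then have Q: "monom 1 m - 1 = ?L * (?L * W)"
    by (simp only: power2_eq_square mult.assoc)
  have "r ^ m = 1"
    using arg_cong[OF Q, of "\<lambda>P. poly P r"] by (simp add: poly_monom)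
  have "pderiv (monom 1 m - 1) = ?L * pderiv (?L * W) + (?L * W) * pderiv ?L"
    unfolding Q by (rule pderiv_mult)
  then have "poly (pderiv (monom 1 m - 1)) r = 0"
    by (simp only: poly_add poly_mult) simp
  then have "of_nat m * r ^ (m - 1) = 0"
    by (simp add: pderiv_diff pderiv_monom poly_monom)
  with assms \<open>r ^ m = 1\<close> show False
    by (cases m) auto
qed

lemma card_roots_of_unity_ge:
  fixes m :: nat
  assumes alg_closed: "\<And>P::'k::field poly. degree P > 0 \<Longrightarrow> \<exists>x. poly P x = 0"
    and m_unit: "of_nat m \<noteq> (0::'k)"
  shows "m \<le> card {z::'k. z ^ m = 1}"
proof (rule ccontr)
  define Q :: "'k poly" where "Q = monom 1 m - 1"
  define R where "R = {z::'k. z ^ m = 1}"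
  define D where "D = (\<Prod>r\<in>R. [:-r, 1:])"
  assume "\<not> m \<le> card R"
  have "m > 0"
    using m_unit by (rule contrapos_np) simp
  then have deg_Q: "degree Q = m"
    unfolding Q_def diff_conv_add_uminus by (subst degree_add_eq_left) (simp_all add: degree_monom_eq)
  with \<open>m > 0\<close> have "Q \<noteq> 0"
    by auto
  have R_roots: "R = {z. poly Q z = 0}"
    by (simp add: R_def Q_def poly_monom)
  then have "finite R"
    using poly_roots_finite[OF \<open>Q \<noteq> 0\<close>] by simp
  then have "D dvd Q"
    unfolding D_def by (rule prod_linear_factors_dvd) (simp add: R_roots)
  then obtain H where QH: "Q = D * H"
    by (elim dvdE)
  with \<open>Q \<noteq> 0\<close> have "D \<noteq> 0" "H \<noteq> 0"
    by auto
  then have "degree Q = card R + degree H"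
    using QH \<open>finite R\<close> by (simp add: degree_mult_eq D_def degree_prod_eq_sum_degree)
  \<comment> \<open>A root of the cofactor H lies in R already, hence is a double root of Q.\<close>
  with deg_Q \<open>\<not> m \<le> card R\<close> obtain r where "poly H r = 0"
    using alg_closed[of H] by auto
  then have "r \<in> R"
    using QH R_roots by auto
  then have D: "D = [:-r, 1:] * (\<Prod>s\<in>R - {r}. [:-s, 1:])"
    unfolding D_def using \<open>finite R\<close> by (simp add: prod.remove)
  obtain H' where H: "H = [:-r, 1:] * H'"
    using \<open>poly H r = 0\<close> poly_eq_0_iff_dvd by (metis dvdE)
  have "Q = ([:-r, 1:] * [:-r, 1:]) * ((\<Prod>s\<in>R - {r}. [:-s, 1:]) * H')"
    unfolding QH D H by (simp only: mult_ac)
  then have "[:-r, 1:] ^ 2 dvd Q"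
    unfolding power2_eq_square by (rule dvdI)
  then show False
    unfolding Q_def using square_linear_not_dvd_power_minus_one[OF m_unit] by blast
qed

lemma exists_root_of_unity_not_root:
  fixes P :: "'k::field poly"
  assumes alg_closed: "\<And>P::'k poly. degree P > 0 \<Longrightarrow> \<exists>x. poly P x = 0"
    and m_unit: "of_nat m \<noteq> (0::'k)"
    and "P \<noteq> 0" and "degree P < m"
  shows "\<exists>z. z ^ m = 1 \<and> poly P z \<noteq> 0"
proof (rule ccontr)
  assume "\<not> ?thesis"
  then have "card {z::'k. z ^ m = 1} \<le> card {x. poly P x = 0}"
    using poly_roots_finite[OF \<open>P \<noteq> 0\<close>] by (intro card_mono) auto
  also have "\<dots> \<le> degree P"
    using \<open>P \<noteq> 0\<close> by (rule card_poly_roots_bound)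
  finally show False
    using card_roots_of_unity_ge[OF alg_closed m_unit] \<open>degree P < m\<close> by linarith
qed

lemma of_nat_nonzero_if_coprime_char:
  assumes "prime p" and "CHAR('k::semiring_1) = p" and "coprime m p"
  shows "of_nat m \<noteq> (0::'k)"
proof
  assume "of_nat m = (0::'k)"
  then have "p dvd m"
    using assms(2) by (simp add: of_nat_eq_0_iff_char_dvd)
  with assms(1,3) show False
    by (metis coprime_common_divisor_nat dvd_refl not_prime_1)
qed

lemma power_pred_eq_of_bool:
  fixes x :: "'a::idom"
  assumes "x ^ q = x" and "2 \<le> q"
  shows "x ^ (q - 1) = of_bool (x \<noteq> 0)"
proof -
  have "x * x ^ (q - 1) = x * 1"
    using assms by (cases q) auto
  then show ?thesis
    using assms(2) by (cases "x = 0") auto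
qed

lemma prod_one_minus_power_pred:
  fixes x :: "nat \<Rightarrow> 'a::idom"
  assumes "\<And>j. j < t \<Longrightarrow> x j ^ q = x j" and "2 \<le> q"
  shows "(\<Prod>j<t. 1 - x j ^ (q - 1)) = of_bool (\<forall>j<t. x j = 0)"
proof -
  have "1 - x j ^ (q - 1) = of_bool (x j = 0)" if "j < t" for j
    using power_pred_eq_of_bool[OF assms(1)[OF that] assms(2)] by simp
  then have "(\<Prod>j<t. 1 - x j ^ (q - 1)) = (\<Prod>j<t. of_bool (x j = 0))"
    by (intro prod.cong) simp_all
  also have "\<dots> = of_bool (\<forall>j<t. x j = 0)"
    by (induction t) (auto simp: less_Suc_eq)
  finally show ?thesis .
qed

section \<open>The lattice and the finite group\<close>

lemma finite_Gset [simp]: "finite (Gset (n :: 's::finite \<Rightarrow> nat))"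
proof -
  have "Gset n = Pi\<^sub>E UNIV (\<lambda>i. {0..<int (n i)})"
    by (auto simp: Gset_def PiE_def Pi_def extensional_def)
  then show ?thesis
    by (auto intro!: finite_PiE)
qed

lemma red_eq_self: "g \<in> Gset n \<Longrightarrow> red n g = g"
  by (auto simp: Gset_def red_def)

lemma red_add_left_eq: "red n (red n u + w) = red n (u + w)"
  by (simp add: red_def mod_add_left_eq)

lemma red_add_right_eq: "red n (u + red n w) = red n (u + w)"
  by (simp add: red_def mod_add_right_eq)

lemma red_diff_left_eq: "red n (red n u - w) = red n (u - w)"
  by (simp add: red_def mod_diff_left_eq)

lemma red_diff_right_eq: "red n (u - red n w) = red n (u - w)"
  by (simp add: red_def mod_diff_right_eq)

lemma periodic_lat_comp_red: "periodic_lat n (\<lambda>v. F (red n v))"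
proof -
  have "red n (v(i := v i + int (n i))) = red n v" for v i
    by (simp add: red_def fun_eq_iff)
  then show ?thesis
    by (simp add: periodic_lat_def)
qed

lemma periodic_lat_shift:
  assumes "periodic_lat n f"
  shows "f (v(i := v i + k * int (n i))) = f v"
proof (induction k rule: int_induct[where k = 0])
  have step: "f (w(i := w i + int (n i))) = f w" for w
    using assms by (simp add: periodic_lat_def)
  {
    case (step1 k)
    let ?w = "v(i := v i + k * int (n i))"
    have "f (v(i := v i + (k + 1) * int (n i))) = f (?w(i := ?w i + int (n i)))"
      by (simp add: algebra_simps)
    also have "\<dots> = f ?w"
      by (rule step)
    also have "\<dots> = f v"
      by (rule step1.IH)
    finally show ?case .
  next
    case (step2 k)
    let ?w = "v(i := v i + (k - 1) * int (n i))"
    have "f ?w = f (?w(i := ?w i + int (n i)))"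
      by (rule step[symmetric])
    also have "\<dots> = f (v(i := v i + k * int (n i)))"
      by (simp add: algebra_simps)
    also have "\<dots> = f v"
      by (rule step2.IH)
    finally show ?case .
  }
qed simp

lemma periodic_lat_red:
  fixes f :: "'s::finite lat \<Rightarrow> 'a"
  assumes "periodic_lat n f"
  shows "f (red n v) = f v"
proof -
  have "f (\<lambda>j. if j \<in> S then v j mod int (n j) else v j) = f v" if "finite S" for S
    using that
  proof (induction S rule: finite_induct)
    case (insert i S)
    define w where "w = (\<lambda>j. if j \<in> S then v j mod int (n j) else v j)"
    have "(\<lambda>j. if j \<in> insert i S then v j mod int (n j) else v j)
        = w(i := w i + (- (w i div int (n i))) * int (n i))"
      using insert.hyps by (auto simp: w_def fun_eq_iff minus_div_mult_eq_mod)
    then have "f (\<lambda>j. if j \<in> insert i S then v j mod int (n j) else v j) = f w"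
      by (simp only: periodic_lat_shift[OF assms])
    also have "\<dots> = f v"
      unfolding w_def by (rule insert.IH)
    finally show ?case .
  qed simp
  from this[OF finite_UNIV] show ?thesis
    by (simp add: red_def)
qed

definition lat_monomial :: "('s::finite \<Rightarrow> 'k::field) \<Rightarrow> 's lat \<Rightarrow> 'k" where
  "lat_monomial z v = (\<Prod>i\<in>UNIV. z i powi v i)"

lemma lat_monomial_zero [simp]: "lat_monomial z 0 = 1"
  by (simp add: lat_monomial_def)

lemma lat_monomial_add:
  "(\<And>i. z i \<noteq> 0) \<Longrightarrow> lat_monomial z (u + w) = lat_monomial z u * lat_monomial z w"
  by (simp add: lat_monomial_def power_int_add prod.distrib)

lemma lat_monomial_nonzero: "(\<And>i. z i \<noteq> 0) \<Longrightarrow> lat_monomial z v \<noteq> 0"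
  by (simp add: lat_monomial_def)

lemma lat_monomial_upd:
  assumes "h i = 0"
  shows "lat_monomial (z(i := w)) (h(i := int k)) = w ^ k * lat_monomial z h"
proof -
  have "lat_monomial (z(i := w)) (h(i := int k)) = w ^ k * (\<Prod>j\<in>UNIV - {i}. z j powi h j)"
    unfolding lat_monomial_def by (subst prod.remove[of UNIV i]) (auto intro!: prod.cong)
  moreover have "lat_monomial z h = (\<Prod>j\<in>UNIV - {i}. z j powi h j)"
    unfolding lat_monomial_def using assms by (subst prod.remove[of UNIV i]) auto
  ultimately show ?thesis
    by simp
qed

lemma power_int_mod_eq:
  fixes x :: "'k::field"
  assumes "x ^ m = 1"
  shows "x powi (k mod int m) = x powi k"
proof (cases "m = 0")
  case False
  with assms have "x \<noteq> 0"
    by (metis power_0_left zero_neq_one)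
  then have "x powi k = x powi (int m * (k div int m)) * x powi (k mod int m)"
    by (simp flip: power_int_add)
  also have "x powi (int m * (k div int m)) = 1"
    using assms by (simp add: power_int_mult)
  finally show ?thesis
    by simp
qed simp

lemma lat_monomial_red:
  "(\<And>i. z i ^ n i = 1) \<Longrightarrow> lat_monomial z (red n v) = lat_monomial z v"
  by (simp add: lat_monomial_def red_def power_int_mod_eq)

lemma conv_lat_lat_monomial:
  assumes "\<And>i. \<xi> i \<noteq> 0"
  shows "conv_lat (lat_monomial \<xi>) a g = lat_monomial \<xi> g * symbol_eval a \<xi>"
proof -
  have "lat_monomial \<xi> (g - w) = lat_monomial \<xi> g * lat_monomial \<xi> (- w)" for w
    using lat_monomial_add[of \<xi> g "- w", OF assms] by simp
  then have "conv_lat (lat_monomial \<xi>) a g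
      = (\<Sum>w\<in>{w. a w \<noteq> 0}. lat_monomial \<xi> g * (a w * lat_monomial \<xi> (- w)))"
    unfolding conv_lat_def by (intro sum.cong) simp_all
  also have "\<dots> = lat_monomial \<xi> g * symbol_eval a \<xi>"
    unfolding symbol_eval_def lat_monomial_def sum_distrib_left by simp
  finally show ?thesis .
qed

lemma periodic_harmonic_lat_monomial:
  assumes "\<And>i. \<xi> i \<noteq> 0 \<and> \<xi> i ^ n i = 1" and "\<forall>j<t. symbol_eval (a j) \<xi> = 0"
  shows "lat_monomial \<xi> \<noteq> (\<lambda>_. 0) \<and> periodic_lat n (lat_monomial \<xi>) \<and> harmonic t a (lat_monomial \<xi>)"
proof (intro conjI)
  show "lat_monomial \<xi> \<noteq> (\<lambda>_. 0)"
    using lat_monomial_zero[of \<xi>] by force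
  have "lat_monomial \<xi> = (\<lambda>v. lat_monomial \<xi> (red n v))"
    using assms(1) by (simp add: lat_monomial_red)
  with periodic_lat_comp_red[of n "lat_monomial \<xi>"] show "periodic_lat n (lat_monomial \<xi>)"
    by simp
  show "harmonic t a (lat_monomial \<xi>)"
    using assms by (simp add: harmonic_def conv_lat_lat_monomial fun_eq_iff)
qed

lemma zero_in_FG: "(\<lambda>_. 0) \<in> FG n"
  by (simp add: FG_def)

lemma convG_in_FG: "convG n f b \<in> FG n"
  by (simp add: FG_def convG_def)

lemma diff_in_FG:
  fixes u v :: "'s lat \<Rightarrow> 'a::group_add"
  shows "u \<in> FG n \<Longrightarrow> v \<in> FG n \<Longrightarrow> (\<lambda>g. u g - v g) \<in> FG n"
  by (simp add: FG_def)

lemma DeltaG_pow_in_FG: "f \<in> FG n \<Longrightarrow> DeltaG_pow n b k f \<in> FG n"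
  by (induction k) (simp_all add: DeltaG_pow_def convG_in_FG)

lemma DeltaG_pow_add: "DeltaG_pow n b (k + l) f = DeltaG_pow n b k (DeltaG_pow n b l f)"
  by (simp add: DeltaG_pow_def funpow_add)

lemma op_prod_closed: "(\<And>j f. f \<in> A \<Longrightarrow> T j f \<in> A) \<Longrightarrow> f \<in> A \<Longrightarrow> op_prod T m f \<in> A"
  by (induction m) auto

lemma op_prod_multiplier:
  fixes \<phi> :: "'f \<Rightarrow> 'a::comm_monoid_mult"
  assumes "\<And>j f. \<phi> (T j f) = \<phi> f * \<mu> j"
  shows "\<phi> (op_prod T m f) = \<phi> f * (\<Prod>j<m. \<mu> j)"
  by (induction m) (simp_all add: assms mult.assoc)

lemma fhat_zero [simp]: "fhat n (\<lambda>_. 0) \<chi> = 0"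
  by (simp add: fhat_def)

lemma fhat_diff: "fhat n (\<lambda>g. u g - v g) \<chi> = fhat n u \<chi> - fhat n v \<chi>"
  by (simp add: fhat_def sum_subtractf left_diff_distrib)

definition coord_slice :: "'s \<Rightarrow> int \<Rightarrow> ('s lat \<Rightarrow> 'a::zero) \<Rightarrow> 's lat \<Rightarrow> 'a" where
  "coord_slice i k c h = (if h i = 0 then c (h(i := k)) else 0)"

section \<open>Fourier analysis on the finite group\<close>

locale discrete_torus =
  fixes n :: "'s::finite \<Rightarrow> nat"
  assumes n_pos: "n i > 0"
begin

lemma zero_in_Gset: "0 \<in> Gset n"
  using n_pos by (simp add: Gset_def)

lemma red_in_Gset: "red n v \<in> Gset n"
  using n_pos by (simp add: Gset_def red_def)

lemma deltaG_in_FG: "deltaG n \<in> FG n"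
  using zero_in_Gset by (auto simp: FG_def deltaG_def)

lemma bij_betw_translate: "bij_betw (\<lambda>k. red n (h + k)) (Gset n) (Gset n)"
  by (rule bij_betw_byWitness[where f' = "\<lambda>g. red n (g - h)"])
    (auto simp: red_in_Gset red_eq_self red_add_right_eq red_diff_left_eq)

lemma bij_betw_reflect: "bij_betw (\<lambda>k. red n (c - k)) (Gset n) (Gset n)"
  by (rule bij_betw_byWitness[where f' = "\<lambda>k. red n (c - k)"])
    (auto simp: red_in_Gset red_eq_self red_diff_right_eq)

lemma lat_monomial_in_characters:
  assumes "\<And>i. z i ^ n i = 1"
  shows "lat_monomial z \<in> characters n"
proof -
  have "z i \<noteq> 0" for i
    using assms[of i] n_pos[of i] by (cases "n i") auto
  then show ?thesis
    using assms unfolding characters_def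
    by (simp add: lat_monomial_nonzero lat_monomial_red lat_monomial_add)
qed

lemma characters_zero:
  assumes "\<chi> \<in> characters n"
  shows "\<chi> 0 = 1"
proof -
  have "\<chi> (red n (0 + 0)) = \<chi> 0 * \<chi> 0" "\<chi> 0 \<noteq> 0"
    using assms zero_in_Gset unfolding characters_def by blast+
  then show ?thesis
    using red_eq_self[OF zero_in_Gset] by simp
qed

lemma fhat_convG:
  assumes \<chi>: "\<chi> \<in> characters n"
  shows "fhat n (convG n f b) \<chi> = fhat n f \<chi> * fhat n b \<chi>"
proof -
  have shift: "(\<Sum>g\<in>Gset n. b (red n (g - h)) * \<chi> g) = \<chi> h * fhat n b \<chi>" if "h \<in> Gset n" for h
  proof -
    have "(\<Sum>g\<in>Gset n. b (red n (g - h)) * \<chi> g)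
        = (\<Sum>k\<in>Gset n. b (red n (red n (h + k) - h)) * \<chi> (red n (h + k)))"
      by (rule sum.reindex_bij_betw[OF bij_betw_translate, symmetric])
    also have "\<dots> = (\<Sum>k\<in>Gset n. \<chi> h * (b k * \<chi> k))"
      using \<chi> that by (intro sum.cong) (auto simp: red_diff_left_eq red_eq_self characters_def)
    finally show ?thesis
      by (simp add: fhat_def sum_distrib_left)
  qed
  have "fhat n (convG n f b) \<chi> = (\<Sum>g\<in>Gset n. \<Sum>h\<in>Gset n. f h * (b (red n (g - h)) * \<chi> g))"
    by (simp add: fhat_def convG_def sum_distrib_right mult.assoc)
  also have "\<dots> = (\<Sum>h\<in>Gset n. f h * (\<Sum>g\<in>Gset n. b (red n (g - h)) * \<chi> g))"
    by (subst sum.swap) (simp add: sum_distrib_left)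
  also have "\<dots> = (\<Sum>h\<in>Gset n. f h * \<chi> h * fhat n b \<chi>)"
    by (intro sum.cong) (simp_all add: shift mult.assoc)
  finally show ?thesis
    by (simp add: fhat_def sum_distrib_right)
qed

lemma fhat_deltaG:
  assumes "\<chi> \<in> characters n"
  shows "fhat n (deltaG n) \<chi> = 1"
proof -
  have "fhat n (deltaG n) \<chi> = (\<Sum>g\<in>Gset n. if g = 0 then \<chi> 0 else 0)"
    unfolding fhat_def deltaG_def by (intro sum.cong) auto
  also have "\<dots> = 1"
    using zero_in_Gset characters_zero[OF assms] by simp
  finally show ?thesis .
qed

lemma fhat_DeltaG_pow:
  assumes "\<chi> \<in> characters n"
  shows "fhat n (DeltaG_pow n b k f) \<chi> = fhat n f \<chi> * fhat n b \<chi> ^ k"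
  by (induction k) (simp_all add: DeltaG_pow_def fhat_convG[OF assms])

lemma fhat_conv_prod:
  "\<chi> \<in> characters n \<Longrightarrow> fhat n (conv_prod n F m) \<chi> = (\<Prod>j<m. fhat n (F j) \<chi>)"
  by (induction m) (simp_all add: fhat_deltaG fhat_convG)

lemma innerG_eq_convG_zero:
  "innerG n u w = convG n u w 0 / of_nat (card (Gset n))"
  using zero_in_Gset by (simp add: innerG_def convG_def)

lemma sum_Gset_slices:
  "(\<Sum>g\<in>Gset n. F g) = (\<Sum>k<n i. \<Sum>h\<in>{h \<in> Gset n. h i = 0}. F (h(i := int k)))"
proof -
  have "bij_betw (\<lambda>(k, h). h(i := int k)) ({..<n i} \<times> {h \<in> Gset n. h i = 0}) (Gset n)"
    by (rule bij_betw_byWitness[where f' = "\<lambda>g. (nat (g i), g(i := 0))"])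
      (use n_pos in \<open>auto simp: Gset_def nat_less_iff\<close>)
  then show ?thesis
    by (simp add: sum.cartesian_product sum.reindex_bij_betw[symmetric] case_prod_beta)
qed

lemma fhat_lat_monomial_upd:
  "fhat n c (lat_monomial (z(i := w)))
     = poly (\<Sum>k<n i. monom (fhat n (coord_slice i (int k) c) (lat_monomial z)) k) w"
proof -
  have slice: "fhat n (coord_slice i (int k) c) (lat_monomial z)
      = (\<Sum>h\<in>{h \<in> Gset n. h i = 0}. c (h(i := int k)) * lat_monomial z h)" for k
    unfolding fhat_def coord_slice_def by (subst sum.inter_filter) (auto intro: sum.cong)
  have "fhat n c (lat_monomial (z(i := w)))
      = (\<Sum>k<n i. \<Sum>h\<in>{h \<in> Gset n. h i = 0}. c (h(i := int k)) * (w ^ k * lat_monomial z h))"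
    unfolding fhat_def by (subst sum_Gset_slices[of _ i]) (simp add: lat_monomial_upd)
  also have "\<dots> = (\<Sum>k<n i. fhat n (coord_slice i (int k) c) (lat_monomial z) * w ^ k)"
    unfolding slice sum_distrib_right by (simp add: ac_simps)
  finally show ?thesis
    by (simp add: poly_sum poly_monom)
qed

lemma coord_slice_in_FG:
  assumes "c \<in> FG n"
  shows "coord_slice i k c \<in> FG n"
proof -
  have "h \<in> Gset n" if "h i = 0" and "c (h(i := k)) \<noteq> 0" for h
  proof -
    have "h(i := k) \<in> Gset n"
      using that(2) assms by (auto simp: FG_def)
    then have "0 \<le> h j \<and> h j < int (n j)" for j
      using that(1) n_pos[of j] by (cases "j = i") (auto simp: Gset_def dest: spec[of _ j])
    then show ?thesis
      by (simp add: Gset_def)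
  qed
  then show ?thesis
    by (auto simp: FG_def coord_slice_def)
qed

end

locale discrete_torus_fourier = discrete_torus n for n :: "'s::finite \<Rightarrow> nat" +
  fixes field_type :: "'k::field itself"
  assumes alg_closed: "\<And>P::'k poly. degree P > 0 \<Longrightarrow> \<exists>x. poly P x = 0"
    and of_nat_n_nonzero: "of_nat (n i) \<noteq> (0::'k)"
begin

lemma exists_root_of_unity_fhat_upd_nonzero:
  fixes c :: "'s lat \<Rightarrow> 'k"
  assumes "fhat n (coord_slice i (int k) c) (lat_monomial z) \<noteq> 0" and "k < n i"
  shows "\<exists>w. w ^ n i = 1 \<and> fhat n c (lat_monomial (z(i := w))) \<noteq> 0"
proof -
  define P where "P = (\<Sum>k<n i. monom (fhat n (coord_slice i (int k) c) (lat_monomial z)) k)"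
  have coeff_P: "coeff P m = (if m < n i then fhat n (coord_slice i (int m) c) (lat_monomial z) else 0)"
    for m
    by (simp add: P_def coeff_sum)
  have "P \<noteq> 0"
    using coeff_P[of k] assms by auto
  moreover have "degree P < n i"
  proof -
    have "degree P \<le> n i - 1"
      by (rule degree_le) (auto simp: coeff_P)
    then show ?thesis
      using n_pos[of i] by linarith
  qed
  ultimately obtain w where "w ^ n i = 1" and "poly P w \<noteq> 0"
    using exists_root_of_unity_not_root[OF alg_closed of_nat_n_nonzero] by blast
  then show ?thesis
    using fhat_lat_monomial_upd[of c z i w] by (auto simp: P_def)
qed

lemma exists_lat_monomial_fhat_nonzero_on:
  fixes c :: "'s lat \<Rightarrow> 'k"
  assumes "finite S" and "c \<in> FG n" and "c \<noteq> (\<lambda>_. 0)"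
    and "\<And>g i. c g \<noteq> 0 \<Longrightarrow> i \<notin> S \<Longrightarrow> g i = 0"
  shows "\<exists>z. (\<forall>i. z i ^ n i = 1) \<and> fhat n c (lat_monomial z) \<noteq> 0"
  using assms
proof (induction S arbitrary: c rule: finite_induct)
  case empty
  then have supp: "c g = 0" if "g \<noteq> 0" for g
    using that by (auto simp: fun_eq_iff)
  from empty.prems(2) obtain g where "c g \<noteq> 0"
    by auto
  with supp have "c 0 \<noteq> 0"
    by (cases "g = 0") auto
  have "fhat n c (lat_monomial (\<lambda>_. 1)) = (\<Sum>g\<in>Gset n. if g = 0 then c 0 else 0)"
    unfolding fhat_def lat_monomial_def by (intro sum.cong) (auto simp: supp)
  also have "\<dots> = c 0"
    using zero_in_Gset by simp
  finally show ?case
    using \<open>c 0 \<noteq> 0\<close> by (intro exI[of _ "\<lambda>_. 1"]) simp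
next
  case (insert i S)
  obtain g0 where "c g0 \<noteq> 0"
    using insert.prems(2) by auto
  then have "g0 \<in> Gset n"
    using insert.prems(1) by (auto simp: FG_def)
  define k0 where "k0 = nat (g0 i)"
  have "k0 < n i" and "int k0 = g0 i"
    using \<open>g0 \<in> Gset n\<close> by (auto simp: Gset_def k0_def nat_less_iff)
  have slice_supp: "h j = 0" if "coord_slice i k c h \<noteq> 0" and "j \<notin> S" for k h j
  proof -
    from that(1) have "h i = 0" and "c (h(i := k)) \<noteq> 0"
      by (auto simp: coord_slice_def split: if_splits)
    then show ?thesis
      using insert.prems(3)[of "h(i := k)" j] that(2) by (metis fun_upd_other insertE)
  qed
  have "coord_slice i (int k0) c (g0(i := 0)) \<noteq> 0"
    using \<open>c g0 \<noteq> 0\<close> \<open>int k0 = g0 i\<close> by (simp add: coord_slice_def)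
  then have "coord_slice i (int k0) c \<noteq> (\<lambda>_. 0)"
    by auto
  then obtain z where z: "\<forall>j. z j ^ n j = 1"
    and "fhat n (coord_slice i (int k0) c) (lat_monomial z) \<noteq> 0"
    using insert.IH[of "coord_slice i (int k0) c", OF coord_slice_in_FG[OF insert.prems(1)]] slice_supp
    by blast
  then obtain w where "w ^ n i = 1" and "fhat n c (lat_monomial (z(i := w))) \<noteq> 0"
    using exists_root_of_unity_fhat_upd_nonzero \<open>k0 < n i\<close> by blast
  moreover have "\<forall>j. (z(i := w)) j ^ n j = 1"
    using z \<open>w ^ n i = 1\<close> by simp
  ultimately show ?case
    by blast
qed

lemma exists_lat_monomial_fhat_nonzero:
  fixes f :: "'s lat \<Rightarrow> 'k"
  assumes "f \<in> FG n" and "f \<noteq> (\<lambda>_. 0)"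
  shows "\<exists>z. (\<forall>i. z i ^ n i = 1) \<and> fhat n f (lat_monomial z) \<noteq> 0"
  using exists_lat_monomial_fhat_nonzero_on[OF finite_UNIV assms] by simp

lemma FG_fhat_eqI:
  fixes u v :: "'s lat \<Rightarrow> 'k"
  assumes "u \<in> FG n" and "v \<in> FG n"
    and "\<And>\<chi>. \<chi> \<in> characters n \<Longrightarrow> fhat n u \<chi> = fhat n v \<chi>"
  shows "u = v"
proof (rule ccontr)
  assume "u \<noteq> v"
  then have "(\<lambda>g. u g - v g) \<noteq> (\<lambda>_. 0)"
    by (auto simp: fun_eq_iff)
  then obtain z where "\<forall>i. z i ^ n i = 1" and nonzero: "fhat n (\<lambda>g. u g - v g) (lat_monomial z) \<noteq> 0"
    using exists_lat_monomial_fhat_nonzero[OF diff_in_FG[OF assms(1,2)]] by blast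
  then have "lat_monomial z \<in> characters n"
    by (simp add: lat_monomial_in_characters)
  with nonzero assms(3) show False
    by (simp add: fhat_diff)
qed

lemma kerG_iff_fhat:
  fixes f :: "'s lat \<Rightarrow> 'k"
  assumes "f \<in> FG n"
  shows "f \<in> kerG n t B \<longleftrightarrow>
    (\<forall>\<chi>\<in>characters n. fhat n f \<chi> * of_bool (\<chi> \<in> Vset n t B) = fhat n f \<chi>)"
proof
  assume f: "f \<in> kerG n t B"
  show "\<forall>\<chi>\<in>characters n. fhat n f \<chi> * of_bool (\<chi> \<in> Vset n t B) = fhat n f \<chi>"
  proof
    fix \<chi> :: "'s lat \<Rightarrow> 'k" assume \<chi>: "\<chi> \<in> characters n"
    have "fhat n f \<chi> * fhat n (B j) \<chi> = 0" if "j < t" for j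
      using f that fhat_convG[OF \<chi>, of f "B j"] by (simp add: kerG_def)
    then show "fhat n f \<chi> * of_bool (\<chi> \<in> Vset n t B) = fhat n f \<chi>"
      using \<chi> by (cases "fhat n f \<chi> = 0") (auto simp: Vset_def)
  qed
next
  assume fhat_f: "\<forall>\<chi>\<in>characters n. fhat n f \<chi> * of_bool (\<chi> \<in> Vset n t B) = fhat n f \<chi>"
  have "convG n f (B j) = (\<lambda>_. 0)" if "j < t" for j
  proof (rule FG_fhat_eqI[OF convG_in_FG zero_in_FG])
    fix \<chi> :: "'s lat \<Rightarrow> 'k" assume \<chi>: "\<chi> \<in> characters n"
    then show "fhat n (convG n f (B j)) \<chi> = fhat n (\<lambda>_. 0) \<chi>"
      using fhat_f that by (cases "\<chi> \<in> Vset n t B") (auto simp: fhat_convG Vset_def)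
  qed
  with assms show "f \<in> kerG n t B"
    by (simp add: kerG_def)
qed

end

section \<open>Periodic harmonic functions\<close>

context discrete_torus
begin

lemma fhat_pushfwd:
  assumes "fin_supp a"
  shows "fhat n (pushfwd n a) \<phi> = (\<Sum>v\<in>{v. a v \<noteq> 0}. a v * \<phi> (red n v))"
proof -
  have "fhat n (pushfwd n a) \<phi> = (\<Sum>g\<in>Gset n. \<Sum>v\<in>{v \<in> {v. a v \<noteq> 0}. red n v = g}. a v * \<phi> (red n v))"
    unfolding fhat_def pushfwd_def by (intro sum.cong) (auto simp: sum_distrib_right)
  also have "\<dots> = (\<Sum>v\<in>{v. a v \<noteq> 0}. a v * \<phi> (red n v))"
    using assms red_in_Gset by (intro sum.group) (auto simp: fin_supp_def)
  finally show ?thesis .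
qed

lemma symbol_eval_inverse_eq_fhat:
  assumes "fin_supp a" and "\<And>i. z i ^ n i = 1"
  shows "symbol_eval a (\<lambda>i. inverse (z i)) = fhat n (pushfwd n a) (lat_monomial z)"
proof -
  have "(\<Prod>i\<in>UNIV. inverse (z i) powi (- v i)) = lat_monomial z v" for v
    by (simp add: lat_monomial_def power_int_minus power_int_inverse)
  then have "(\<Prod>i\<in>UNIV. inverse (z i) powi (- v i)) = lat_monomial z (red n v)" for v
    using assms(2) by (simp add: lat_monomial_red)
  then show ?thesis
    using assms(1) by (simp add: symbol_eval_def fhat_pushfwd)
qed

lemma convG_restrict_pushfwd:
  fixes a :: "'s lat \<Rightarrow> 'a::field"
  assumes "fin_supp a" and "periodic_lat n f" and "g \<in> Gset n"
  shows "convG n (\<lambda>h. if h \<in> Gset n then f h else 0) (pushfwd n a) g = conv_lat f a g"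
proof -
  have "convG n (\<lambda>h. if h \<in> Gset n then f h else 0) (pushfwd n a) g
      = (\<Sum>h\<in>Gset n. f h * pushfwd n a (red n (g - h)))"
    using assms(3) by (simp add: convG_def)
  also have "\<dots> = (\<Sum>k\<in>Gset n. f (red n (g - k)) * pushfwd n a (red n (g - red n (g - k))))"
    by (rule sum.reindex_bij_betw[OF bij_betw_reflect, symmetric])
  also have "\<dots> = fhat n (pushfwd n a) (\<lambda>k. f (red n (g - k)))"
    unfolding fhat_def using assms(3)
    by (intro sum.cong) (simp_all add: red_diff_right_eq red_eq_self mult.commute)
  also have "\<dots> = conv_lat f a g"
    unfolding conv_lat_def fhat_pushfwd[OF assms(1)]
    by (intro sum.cong) (simp_all add: red_diff_right_eq periodic_lat_red[OF assms(2)])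
  finally show ?thesis .
qed

lemma restrict_in_kerG:
  fixes a :: "nat \<Rightarrow> 's lat \<Rightarrow> 'a::field"
  assumes "\<forall>j<t. fin_supp (a j)" and "periodic_lat n f" and "harmonic t a f"
  shows "(\<lambda>h. if h \<in> Gset n then f h else 0) \<in> kerG n t (\<lambda>j. pushfwd n (a j))"
proof -
  have "convG n (\<lambda>h. if h \<in> Gset n then f h else 0) (pushfwd n (a j)) g = 0" if "j < t" for j g
    using assms that convG_restrict_pushfwd[of "a j" f g]
    by (cases "g \<in> Gset n") (simp_all add: harmonic_def convG_def)
  then show ?thesis
    by (auto simp: kerG_def FG_def)
qed

lemma periodic_harmonic_of_Vset:
  assumes "\<forall>j<t. fin_supp (a j)" and \<chi>: "\<chi> \<in> Vset n t (\<lambda>j. pushfwd n (a j))"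
  defines "f \<equiv> \<lambda>v. \<chi> (red n (- v))"
  \<comment> \<open>Reflecting turns conv_lat f (a j) into a multiple of a Fourier coefficient at chi.\<close>
  shows "f \<noteq> (\<lambda>_. 0) \<and> periodic_lat n f \<and> harmonic t a f"
proof (intro conjI)
  have char: "\<chi> \<in> characters n"
    using \<chi> by (simp add: Vset_def)
  then have "f 0 = 1"
    using characters_zero red_eq_self[OF zero_in_Gset] by (simp add: f_def)
  then show "f \<noteq> (\<lambda>_. 0)"
    by auto
  have "red n (- red n v) = red n (- v)" for v
    by (simp add: red_def mod_minus_eq)
  then have "f = (\<lambda>v. \<chi> (red n (- red n v)))"
    by (simp add: f_def)
  with periodic_lat_comp_red[of n "\<lambda>u. \<chi> (red n (- u))"] show "periodic_lat n f"
    by simp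
  have f_diff: "f (g - w) = \<chi> (red n (- g)) * \<chi> (red n w)" for g w
  proof -
    have "red n (- (g - w)) = red n (red n (- g) + red n w)"
      by (simp add: red_add_left_eq red_add_right_eq)
    moreover have "\<chi> (red n (red n (- g) + red n w)) = \<chi> (red n (- g)) * \<chi> (red n w)"
      using char red_in_Gset unfolding characters_def by blast
    ultimately show ?thesis
      by (simp add: f_def)
  qed
  have "conv_lat f (a j) g = 0" if "j < t" for j g
  proof -
    have "conv_lat f (a j) g = (\<Sum>w\<in>{w. a j w \<noteq> 0}. \<chi> (red n (- g)) * (a j w * \<chi> (red n w)))"
      unfolding conv_lat_def f_diff by (intro sum.cong) simp_all
    also have "\<dots> = \<chi> (red n (- g)) * fhat n (pushfwd n (a j)) \<chi>"
      using assms(1) that by (simp add: fhat_pushfwd sum_distrib_left)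
    also have "fhat n (pushfwd n (a j)) \<chi> = 0"
      using \<chi> that by (simp add: Vset_def)
    finally show ?thesis
      by simp
  qed
  then show "harmonic t a f"
    by (simp add: harmonic_def fun_eq_iff)
qed

end

context discrete_torus_fourier
begin

lemma periodic_harmonic_imp_Vset:
  fixes f :: "'s lat \<Rightarrow> 'k"
  assumes "\<forall>j<t. fin_supp (a j)" and "f \<noteq> (\<lambda>_. 0)" and "periodic_lat n f" and "harmonic t a f"
  shows "\<exists>z. (\<forall>i. z i ^ n i = 1) \<and> lat_monomial z \<in> Vset n t (\<lambda>j. pushfwd n (a j))"
proof -
  define f0 where "f0 = (\<lambda>h. if h \<in> Gset n then f h else 0)"
  have ker: "f0 \<in> kerG n t (\<lambda>j. pushfwd n (a j))"
    unfolding f0_def using assms(1,3,4) by (rule restrict_in_kerG)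
  obtain v where "f v \<noteq> 0"
    using assms(2) by auto
  then have "f0 (red n v) \<noteq> 0"
    using periodic_lat_red[OF assms(3)] red_in_Gset by (simp add: f0_def)
  then have "f0 \<in> FG n" "f0 \<noteq> (\<lambda>_. 0)"
    using ker by (auto simp: kerG_def)
  then obtain z where z: "\<forall>i. z i ^ n i = 1" and "fhat n f0 (lat_monomial z) \<noteq> 0"
    using exists_lat_monomial_fhat_nonzero by blast
  moreover have "lat_monomial z \<in> characters n"
    using z by (simp add: lat_monomial_in_characters)
  ultimately have "lat_monomial z \<in> Vset n t (\<lambda>j. pushfwd n (a j))"
    using ker \<open>f0 \<in> FG n\<close> by (auto simp: kerG_iff_fhat)
  with z show ?thesis
    by blast
qed

lemma periodic_harmonic_iff_Vset:
  assumes "\<forall>j<t. fin_supp (a j)"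
  shows "(\<exists>f :: 's lat \<Rightarrow> 'k. f \<noteq> (\<lambda>_. 0) \<and> periodic_lat n f \<and> harmonic t a f)
    \<longleftrightarrow> Vset n t (\<lambda>j. pushfwd n (a j)) \<noteq> {}"
  using periodic_harmonic_imp_Vset[OF assms] periodic_harmonic_of_Vset[OF assms] by blast

lemma Vset_iff_symbol_roots:
  fixes a :: "nat \<Rightarrow> 's lat \<Rightarrow> 'k"
  assumes "\<forall>j<t. fin_supp (a j)"
  shows "Vset n t (\<lambda>j. pushfwd n (a j)) \<noteq> {}
    \<longleftrightarrow> (\<exists>\<xi>. (\<forall>i. \<xi> i \<noteq> 0 \<and> \<xi> i ^ n i = 1) \<and> (\<forall>j<t. symbol_eval (a j) \<xi> = 0))"
proof
  assume "Vset n t (\<lambda>j. pushfwd n (a j)) \<noteq> {}"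
  then obtain z where z: "\<forall>i. z i ^ n i = 1" and "lat_monomial z \<in> Vset n t (\<lambda>j. pushfwd n (a j))"
    using periodic_harmonic_iff_Vset[OF assms] periodic_harmonic_imp_Vset[OF assms] by blast
  then have "\<forall>j<t. symbol_eval (a j) (\<lambda>i. inverse (z i)) = 0"
    using assms by (simp add: Vset_def symbol_eval_inverse_eq_fhat)
  moreover have "inverse (z i) \<noteq> 0 \<and> inverse (z i) ^ n i = 1" for i
  proof -
    have "z i \<noteq> 0"
      using z n_pos[of i] by (metis power_0_left zero_neq_one neq0_conv)
    then show ?thesis
      using z by (simp add: power_inverse)
  qed
  ultimately show "\<exists>\<xi>. (\<forall>i. \<xi> i \<noteq> 0 \<and> \<xi> i ^ n i = 1) \<and> (\<forall>j<t. symbol_eval (a j) \<xi> = 0)"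
    by (intro exI[of _ "\<lambda>i. inverse (z i)"]) simp
next
  assume "\<exists>\<xi>. (\<forall>i. \<xi> i \<noteq> 0 \<and> \<xi> i ^ n i = 1) \<and> (\<forall>j<t. symbol_eval (a j) \<xi> = 0)"
  then show "Vset n t (\<lambda>j. pushfwd n (a j)) \<noteq> {}"
    using periodic_harmonic_lat_monomial periodic_harmonic_iff_Vset[OF assms] by blast
qed

end

section \<open>The kernel of the Laplacians and its projection\<close>

context discrete_torus
begin

lemma fhat_conv_prod_frobenius:
  assumes "2 \<le> q" and "\<And>j. j < t \<Longrightarrow> fhat n (B j) \<chi> ^ q = fhat n (B j) \<chi>"
    and "\<chi> \<in> characters n"
  shows "fhat n (conv_prod n (\<lambda>j g. deltaG n g - DeltaG_pow n (B j) (q - 1) (deltaG n) g) t) \<chi>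
    = of_bool (\<chi> \<in> Vset n t B)"
proof -
  have "fhat n (conv_prod n (\<lambda>j g. deltaG n g - DeltaG_pow n (B j) (q - 1) (deltaG n) g) t) \<chi>
      = (\<Prod>j<t. 1 - fhat n (B j) \<chi> ^ (q - 1))"
    using assms(3) by (simp add: fhat_conv_prod fhat_diff fhat_DeltaG_pow fhat_deltaG)
  also have "\<dots> = of_bool (\<forall>j<t. fhat n (B j) \<chi> = 0)"
    using assms(1,2) by (rule prod_one_minus_power_pred[rotated])
  finally show ?thesis
    using assms(3) by (simp add: Vset_def)
qed

lemma fhat_op_prod_frobenius:
  assumes "2 \<le> q" and "\<And>j. j < t \<Longrightarrow> fhat n (B j) \<chi> ^ q = fhat n (B j) \<chi>"
    and "\<chi> \<in> characters n"
  shows "fhat n (op_prod (\<lambda>j f g. f g - DeltaG_pow n (B j) (q - 1) f g) t f) \<chi>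
    = fhat n f \<chi> * of_bool (\<chi> \<in> Vset n t B)"
proof -
  have "fhat n (op_prod (\<lambda>j f g. f g - DeltaG_pow n (B j) (q - 1) f g) t f) \<chi>
      = fhat n f \<chi> * (\<Prod>j<t. 1 - fhat n (B j) \<chi> ^ (q - 1))"
    by (rule op_prod_multiplier[where \<phi> = "\<lambda>f. fhat n f \<chi>"])
      (simp add: fhat_diff fhat_DeltaG_pow[OF assms(3)] right_diff_distrib)
  also have "\<dots> = fhat n f \<chi> * of_bool (\<forall>j<t. fhat n (B j) \<chi> = 0)"
    using assms(1,2) by (subst prod_one_minus_power_pred[rotated]) simp_all
  finally show ?thesis
    using assms(3) by (simp add: Vset_def)
qed

end

context discrete_torus_fourier
begin

lemma kerG_eq_principal_ideal:
  fixes P :: "'s lat \<Rightarrow> 'k"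
  assumes fhat_P: "\<And>\<chi>. \<chi> \<in> characters n \<Longrightarrow> fhat n P \<chi> = of_bool (\<chi> \<in> Vset n t B)"
  shows "kerG n t B = principal_ideal n P"
proof (intro equalityI subsetI)
  fix f assume f: "f \<in> kerG n t B"
  then have "f \<in> FG n"
    by (simp add: kerG_def)
  moreover have "convG n P f = f"
    using f \<open>f \<in> FG n\<close>
    by (intro FG_fhat_eqI[OF convG_in_FG]) (simp_all add: kerG_iff_fhat fhat_convG fhat_P mult.commute)
  ultimately show "f \<in> principal_ideal n P"
    unfolding principal_ideal_def by force
next
  fix f assume "f \<in> principal_ideal n P"
  then obtain c where "f = convG n P c"
    by (auto simp: principal_ideal_def)
  then show "f \<in> kerG n t B"
    by (simp add: kerG_iff_fhat convG_in_FG fhat_convG fhat_P)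
qed

lemma orth_proj_kerG:
  fixes T :: "('s lat \<Rightarrow> 'k) \<Rightarrow> 's lat \<Rightarrow> 'k"
  assumes T_FG: "\<And>f. f \<in> FG n \<Longrightarrow> T f \<in> FG n"
    and fhat_T: "\<And>f \<chi>. \<chi> \<in> characters n \<Longrightarrow> fhat n (T f) \<chi> = fhat n f \<chi> * of_bool (\<chi> \<in> Vset n t B)"
  shows "orth_proj n T (kerG n t B)"
  unfolding orth_proj_def
proof (intro conjI ballI)
  fix f :: "'s lat \<Rightarrow> 'k" assume f: "f \<in> FG n"
  show "T f \<in> kerG n t B"
    by (simp add: kerG_iff_fhat T_FG f fhat_T)
  fix w assume w: "w \<in> kerG n t B"
  then have "w \<in> FG n"
    by (simp add: kerG_def)
  have "convG n (\<lambda>g. f g - T f g) w = (\<lambda>_. 0)"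
  proof (rule FG_fhat_eqI[OF convG_in_FG zero_in_FG])
    fix \<chi> :: "'s lat \<Rightarrow> 'k" assume \<chi>: "\<chi> \<in> characters n"
    with w \<open>w \<in> FG n\<close> have "fhat n w \<chi> * of_bool (\<chi> \<in> Vset n t B) = fhat n w \<chi>"
      by (simp add: kerG_iff_fhat)
    with \<chi> show "fhat n (convG n (\<lambda>g. f g - T f g) w) \<chi> = fhat n (\<lambda>_. 0) \<chi>"
      by (cases "\<chi> \<in> Vset n t B") (simp_all add: fhat_convG fhat_diff fhat_T)
  qed
  then show "innerG n (\<lambda>g. f g - T f g) w = 0"
    by (simp add: innerG_eq_convG_zero)
next
  fix w assume w: "w \<in> kerG n t B"
  then have "w \<in> FG n"
    by (simp add: kerG_def)
  with w show "T w = w"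
    by (intro FG_fhat_eqI[OF T_FG]) (simp_all add: kerG_iff_fhat fhat_T)
qed

lemma kerG_eq_principal_ideal_frobenius:
  fixes B :: "nat \<Rightarrow> 's lat \<Rightarrow> 'k"
  assumes "2 \<le> q" and "\<forall>j<t. \<forall>\<chi>\<in>characters n. fhat n (B j) \<chi> ^ q = fhat n (B j) \<chi>"
  shows "kerG n t B
    = principal_ideal n (conv_prod n (\<lambda>j g. deltaG n g - DeltaG_pow n (B j) (q - 1) (deltaG n) g) t)"
  using assms(2)
  by (intro kerG_eq_principal_ideal fhat_conv_prod_frobenius[OF assms(1)]) auto

lemma orth_proj_frobenius:
  fixes B :: "nat \<Rightarrow> 's lat \<Rightarrow> 'k"
  assumes "2 \<le> q" and "\<forall>j<t. \<forall>\<chi>\<in>characters n. fhat n (B j) \<chi> ^ q = fhat n (B j) \<chi>"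
  shows "orth_proj n (op_prod (\<lambda>j f g. f g - DeltaG_pow n (B j) (q - 1) f g) t) (kerG n t B)"
  using assms(2)
  by (intro orth_proj_kerG op_prod_closed diff_in_FG DeltaG_pow_in_FG fhat_op_prod_frobenius[OF assms(1)])
    auto

section \<open>A single Laplacian\<close>

lemma DeltaG_pow_pred_eq_self:
  fixes b f :: "'s lat \<Rightarrow> 'k"
  assumes "2 \<le> q" and "\<And>\<chi>. \<chi> \<in> characters n \<Longrightarrow> fhat n b \<chi> ^ q = fhat n b \<chi>"
    and "\<forall>\<chi>\<in>characters n. fhat n b \<chi> \<noteq> 0" and "f \<in> FG n"
  shows "DeltaG_pow n b (q - 1) f = f"
proof (rule FG_fhat_eqI[OF DeltaG_pow_in_FG[OF assms(4)] assms(4)])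
  fix \<chi> :: "'s lat \<Rightarrow> 'k" assume \<chi>: "\<chi> \<in> characters n"
  then have "fhat n b \<chi> ^ (q - 1) = 1"
    using power_pred_eq_of_bool[OF assms(2)[OF \<chi>] assms(1)] assms(3) by simp
  with \<chi> show "fhat n (DeltaG_pow n b (q - 1) f) \<chi> = fhat n f \<chi>"
    by (simp add: fhat_DeltaG_pow)
qed

lemma DeltaG_pow_deltaG_neq:
  fixes b :: "'s lat \<Rightarrow> 'k"
  assumes "\<chi> \<in> characters n" and "fhat n b \<chi> = 0" and "k > 0"
  shows "DeltaG_pow n b k (deltaG n) \<noteq> deltaG n"
proof
  assume "DeltaG_pow n b k (deltaG n) = deltaG n"
  then have "fhat n (deltaG n) \<chi> * fhat n b \<chi> ^ k = fhat n (deltaG n) \<chi>"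
    using fhat_DeltaG_pow[OF assms(1)] by metis
  with assms show False
    by (simp add: fhat_deltaG power_0_left)
qed

lemma DeltaG_pow_pred_deltaG_iff:
  fixes b :: "'s lat \<Rightarrow> 'k"
  assumes "2 \<le> q" and "\<And>\<chi>. \<chi> \<in> characters n \<Longrightarrow> fhat n b \<chi> ^ q = fhat n b \<chi>"
  shows "DeltaG_pow n b (q - 1) (deltaG n) = deltaG n \<longleftrightarrow> (\<forall>\<chi>\<in>characters n. fhat n b \<chi> \<noteq> 0)"
proof
  assume "DeltaG_pow n b (q - 1) (deltaG n) = deltaG n"
  with assms(1) show "\<forall>\<chi>\<in>characters n. fhat n b \<chi> \<noteq> 0"
    using DeltaG_pow_deltaG_neq[of _ b "q - 1"] by fastforce
qed (rule DeltaG_pow_pred_eq_self[OF assms _ deltaG_in_FG])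

lemma DeltaG_pow_pred_id_iff:
  fixes b :: "'s lat \<Rightarrow> 'k"
  assumes "2 \<le> q" and "\<And>\<chi>. \<chi> \<in> characters n \<Longrightarrow> fhat n b \<chi> ^ q = fhat n b \<chi>"
  shows "(\<forall>f\<in>FG n. DeltaG_pow n b (q - 1) f = f) \<longleftrightarrow> (\<forall>\<chi>\<in>characters n. fhat n b \<chi> \<noteq> 0)"
  using DeltaG_pow_pred_deltaG_iff[OF assms] DeltaG_pow_pred_eq_self[OF assms] deltaG_in_FG
  by blast

lemma periodic_seq_DeltaG_pow_deltaG_iff:
  fixes b :: "'s lat \<Rightarrow> 'k"
  assumes "2 \<le> q" and "\<And>\<chi>. \<chi> \<in> characters n \<Longrightarrow> fhat n b \<chi> ^ q = fhat n b \<chi>"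
  shows "periodic_seq (\<lambda>k. DeltaG_pow n b k (deltaG n)) \<longleftrightarrow> (\<forall>\<chi>\<in>characters n. fhat n b \<chi> \<noteq> 0)"
proof
  assume "periodic_seq (\<lambda>k. DeltaG_pow n b k (deltaG n))"
  then obtain T where "T > 0" and "DeltaG_pow n b (0 + T) (deltaG n) = DeltaG_pow n b 0 (deltaG n)"
    unfolding periodic_seq_def by blast
  then show "\<forall>\<chi>\<in>characters n. fhat n b \<chi> \<noteq> 0"
    using DeltaG_pow_deltaG_neq[of _ b T] by (auto simp: DeltaG_pow_def)
next
  assume "\<forall>\<chi>\<in>characters n. fhat n b \<chi> \<noteq> 0"
  then have "DeltaG_pow n b (k + (q - 1)) (deltaG n) = DeltaG_pow n b k (deltaG n)" for k
    using DeltaG_pow_pred_eq_self[OF assms _ deltaG_in_FG] by (simp add: DeltaG_pow_add)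
  then show "periodic_seq (\<lambda>k. DeltaG_pow n b k (deltaG n))"
    unfolding periodic_seq_def using assms(1) by (intro exI[of _ "q - 1"]) simp
qed

lemma single_equation_criteria:
  fixes a :: "nat \<Rightarrow> 's lat \<Rightarrow> 'k"
  assumes "t = 1" and "\<forall>j<t. fin_supp (a j)" and "2 \<le> q"
    and "\<forall>j<t. \<forall>\<chi>\<in>characters n. fhat n (pushfwd n (a j)) \<chi> ^ q = fhat n (pushfwd n (a j)) \<chi>"
  shows "((\<exists>f. f \<noteq> (\<lambda>_. 0) \<and> periodic_lat n f \<and> harmonic t a f)
           \<longleftrightarrow> DeltaG_pow n (pushfwd n (a 0)) (q - 1) (deltaG n) \<noteq> deltaG n)
    \<and> (DeltaG_pow n (pushfwd n (a 0)) (q - 1) (deltaG n) \<noteq> deltaG n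
         \<longleftrightarrow> (\<exists>f\<in>FG n. DeltaG_pow n (pushfwd n (a 0)) (q - 1) f \<noteq> f))
    \<and> ((\<exists>f. f \<noteq> (\<lambda>_. 0) \<and> periodic_lat n f \<and> harmonic t a f)
         \<longleftrightarrow> \<not> periodic_seq (\<lambda>k. DeltaG_pow n (pushfwd n (a 0)) k (deltaG n)))"
proof -
  have frob: "\<And>\<chi>. \<chi> \<in> characters n \<Longrightarrow>
      fhat n (pushfwd n (a 0)) \<chi> ^ q = fhat n (pushfwd n (a 0)) \<chi>"
    using assms(1,4) by simp
  have "(\<exists>f. f \<noteq> (\<lambda>_. 0) \<and> periodic_lat n f \<and> harmonic t a f)
      \<longleftrightarrow> \<not> (\<forall>\<chi>\<in>characters n. fhat n (pushfwd n (a 0)) \<chi> \<noteq> 0)"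
    using periodic_harmonic_iff_Vset[OF assms(2)] assms(1) by (auto simp: Vset_def)
  then show ?thesis
    using DeltaG_pow_pred_deltaG_iff[OF assms(3) frob] DeltaG_pow_pred_id_iff[OF assms(3) frob]
      periodic_seq_DeltaG_pow_deltaG_iff[OF assms(3) frob]
    by blast
qed

end

theorem theorem3p2:
  fixes p :: nat and n :: "'s::finite \<Rightarrow> nat" and t :: nat
    and a :: "nat \<Rightarrow> 's lat \<Rightarrow> 'k::field" and q0 r0 :: nat
  assumes K: "alg_closure_GFp p TYPE('k)"
    and a_fin: "\<forall>j<t. fin_supp (a j)"
    and n_pos: "\<forall>i. n i > 0" and n_cop: "\<forall>i. coprime (n i) p"
    and q0_def: "q0 = p ^ r0" and r0_pos: "r0 > 0"
    and q0_prop: "\<forall>j<t. \<forall>\<chi>\<in>characters n.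
                    fhat n (pushfwd n (a j)) \<chi> ^ q0 = fhat n (pushfwd n (a j)) \<chi>"
    and q0_min: "\<forall>r>0. (\<forall>j<t. \<forall>\<chi>\<in>characters n.
                    fhat n (pushfwd n (a j)) \<chi> ^ (p ^ r) = fhat n (pushfwd n (a j)) \<chi>)
                  \<longrightarrow> r0 \<le> r"
  shows
    "((\<exists>f. f \<noteq> (\<lambda>_. 0) \<and> periodic_lat n f \<and> harmonic t a f)
        \<longleftrightarrow> Vset n t (\<lambda>j. pushfwd n (a j)) \<noteq> {})
     \<and> (Vset n t (\<lambda>j. pushfwd n (a j)) \<noteq> {}
        \<longleftrightarrow> (\<exists>\<xi>::'s \<Rightarrow> 'k. (\<forall>i. \<xi> i \<noteq> 0 \<and> \<xi> i ^ n i = 1)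
               \<and> (\<forall>j<t. symbol_eval (a j) \<xi> = 0)))
     \<and> kerG n t (\<lambda>j. pushfwd n (a j))
         = principal_ideal n
             (conv_prod n (\<lambda>j g. deltaG n g - DeltaG_pow n (pushfwd n (a j)) (q0 - 1) (deltaG n) g) t)
     \<and> orth_proj n
         (op_prod (\<lambda>j f g. f g - DeltaG_pow n (pushfwd n (a j)) (q0 - 1) f g) t)
         (kerG n t (\<lambda>j. pushfwd n (a j)))
     \<and> (t = 1 \<longrightarrow>
          ((\<exists>f. f \<noteq> (\<lambda>_. 0) \<and> periodic_lat n f \<and> harmonic t a f)
             \<longleftrightarrow> DeltaG_pow n (pushfwd n (a 0)) (q0 - 1) (deltaG n) \<noteq> deltaG n)
        \<and> (DeltaG_pow n (pushfwd n (a 0)) (q0 - 1) (deltaG n) \<noteq> deltaG n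
             \<longleftrightarrow> (\<exists>f\<in>FG n. DeltaG_pow n (pushfwd n (a 0)) (q0 - 1) f \<noteq> f))
        \<and> ((\<exists>f. f \<noteq> (\<lambda>_. 0) \<and> periodic_lat n f \<and> harmonic t a f)
             \<longleftrightarrow> \<not> periodic_seq (\<lambda>k. DeltaG_pow n (pushfwd n (a 0)) k (deltaG n))))"
proof -
  have "prime p" and "CHAR('k) = p" and alg: "\<And>P::'k poly. degree P > 0 \<Longrightarrow> \<exists>x. poly P x = 0"
    using K by (auto simp: alg_closure_GFp_def)
  interpret discrete_torus_fourier n "TYPE('k)"
    using n_pos alg of_nat_nonzero_if_coprime_char[OF \<open>prime p\<close> \<open>CHAR('k) = p\<close>] n_cop
    by unfold_locales auto
  have "2 \<le> p"
    using \<open>prime p\<close> by (rule prime_ge_2_nat)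
  then have q0: "2 \<le> q0"
    unfolding q0_def using self_le_power[of p r0] r0_pos by linarith
  show ?thesis
    using periodic_harmonic_iff_Vset[OF a_fin] Vset_iff_symbol_roots[OF a_fin]
      kerG_eq_principal_ideal_frobenius[OF q0 q0_prop] orth_proj_frobenius[OF q0 q0_prop]
      single_equation_criteria[OF _ a_fin q0 q0_prop]
    by blast
qed

end
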